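(* There is a constant $C$ such that for every sufficiently large $n$ there exists a $C_4$-free $2$-planar graph on $n$ vertices with at least $2.5n-C$ edges.
   Context: All graphs are finite and simple. A graph is $k$-planar if it admits a drawing in the plane in which every edge is crossed at most $k$ times. A graph is $C_\ell$-free if it contains no cycle of length $\ell$ as a subgraph. (The paper states the edge count as $2.5n-O(1)$.) *)

theory Defs
  imports "HOL-Analysis.Analysis"
begin

definition simple_graph :: "'v set \<Rightarrow> 'v set set \<Rightarrow> bool" where
  "simple_graph V E \<longleftrightarrow> finite V \<and> E \<subseteq> {{u, v} | u v. u \<in> V \<and> v \<in> V \<and> u \<noteq> v}"

definition C4_free :: "'v set \<Rightarrow> 'v set set \<Rightarrow> bool" where
  "C4_free V E \<longleftrightarrow> \<not> (\<exists>a b c d. a \<in> V \<and> b \<in> V \<and> c \<in> V \<and> d \<in> V \<and> distinct [a, b, c, d] \<and>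
      {a, b} \<in> E \<and> {b, c} \<in> E \<and> {c, d} \<in> E \<and> {d, a} \<in> E)"

definition curve_interior :: "(real \<Rightarrow> real \<times> real) \<Rightarrow> (real \<times> real) set" where
  "curve_interior g = path_image g - {pathstart g, pathfinish g}"

definition is_drawing :: "'v set \<Rightarrow> 'v set set \<Rightarrow> ('v \<Rightarrow> real \<times> real)
    \<Rightarrow> ('v set \<Rightarrow> real \<Rightarrow> real \<times> real) \<Rightarrow> bool" where
  "is_drawing V E p \<gamma> \<longleftrightarrow> inj_on p V \<and>
     (\<forall>e\<in>E. (\<exists>u v. e = {u, v} \<and> pathstart (\<gamma> e) = p u \<and> pathfinish (\<gamma> e) = p v) \<and>
        arc (\<gamma> e) \<and> (\<forall>w\<in>V. p w \<notin> curve_interior (\<gamma> e))) \<and>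
     (\<forall>e\<in>E. \<forall>f\<in>E. e \<noteq> f \<longrightarrow> finite (curve_interior (\<gamma> e) \<inter> curve_interior (\<gamma> f)))"

definition crossings_on :: "'v set set \<Rightarrow> ('v set \<Rightarrow> real \<Rightarrow> real \<times> real) \<Rightarrow> 'v set \<Rightarrow> nat" where
  "crossings_on E \<gamma> e = (\<Sum>f\<in>E - {e}. card (curve_interior (\<gamma> e) \<inter> curve_interior (\<gamma> f)))"

definition k_planar :: "nat \<Rightarrow> 'v set \<Rightarrow> 'v set set \<Rightarrow> bool" where
  "k_planar k V E \<longleftrightarrow> (\<exists>p \<gamma>. is_drawing V E p \<gamma> \<and> (\<forall>e\<in>E. crossings_on E \<gamma> e \<le> k))"

end

(* Place vertex 2i + r at the point z^i w_r of the complex plane, where z = -2 - i, w_0 = 1 and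
   w_1 = -2 + i, and draw straight all translates {2i + a, 2i + b} of the five base edges
   {1, 2}, {1, 4}, {1, 8}, {0, 7}, {1, 7}; this gives 5/2 n - O(1) edges. Multiplication by z maps
   the drawing of each edge onto that of its translate by 2 and scales norms by sqrt 5, so it
   suffices to compare a base edge with the j-th translate of a base edge. For j \<ge> 5 their norms
   keep them apart, since base edges lie in the annulus 1 \<le> |x| \<le> 25, and the remaining
   pairs are settled by orientation tests: only two pairs of edge classes cross, each in a single
   point, so every edge is crossed at most twice. Adjacent vertices differ by 1, 3, 7 (an even and
   an odd vertex) or by 6 (two odd vertices), and a parity argument on these differences rules out
   4-cycles. *)

theory Submission
  imports Defs
begin

section \<open>Segments in the plane\<close>

type_synonym point = "real \<times> real"

definition cross :: "point \<Rightarrow> point \<Rightarrow> real" where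
  "cross u v = fst u * snd v - snd u * fst v"

lemma cross_scaleR_left: "cross (r *\<^sub>R u) v = r * cross u v"
  and cross_self: "cross u u = 0"
  and cross_commute: "cross v u = - cross u v"
  by (simp_all add: cross_def algebra_simps)

lemma cross_closed_segment:
  assumes "x \<in> closed_segment a b"
  shows "cross (b - a) (x - a) = 0"
proof -
  obtain u where "x - a = u *\<^sub>R (b - a)"
    using assms by (auto simp: in_segment algebra_simps)
  then show ?thesis by (simp add: cross_scaleR_left cross_commute[of "b - a"] cross_self)
qed

lemma cross_convex_combination:
  "cross (b - a) ((1 - u) *\<^sub>R c + u *\<^sub>R d - a) =
     (1 - u) * cross (b - a) (c - a) + u * cross (b - a) (d - a)"
  by (simp add: cross_def algebra_simps)

definition left_of_line :: "point \<Rightarrow> point \<Rightarrow> point \<Rightarrow> point \<Rightarrow> bool" where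
  "left_of_line a b c d \<longleftrightarrow> 0 \<le> cross (b - a) (c - a) \<and> 0 \<le> cross (b - a) (d - a) \<and>
     0 < cross (b - a) (c - a) + cross (b - a) (d - a)"

lemma left_of_line_disjoint:
  assumes "left_of_line a b c d"
  shows "closed_segment a b \<inter> open_segment c d = {}"
proof (intro equals0I)
  fix x assume x: "x \<in> closed_segment a b \<inter> open_segment c d"
  then obtain u where u: "0 < u" "u < 1" "x = (1 - u) *\<^sub>R c + u *\<^sub>R d"
    by (auto simp: in_segment)
  have "0 < (1 - u) * cross (b - a) (c - a) + u * cross (b - a) (d - a)"
    using assms u(1,2) unfolding left_of_line_def
    by (smt (verit) mult_nonneg_nonneg mult_pos_pos)
  moreover have "cross (b - a) (x - a) = 0"
    using x cross_closed_segment by blast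
  ultimately show False
    using u(3) cross_convex_combination by simp
qed

definition line_separated :: "point \<Rightarrow> point \<Rightarrow> point \<Rightarrow> point \<Rightarrow> bool" where
  "line_separated a b c d \<longleftrightarrow>
     left_of_line a b c d \<or> left_of_line b a c d \<or> left_of_line c d a b \<or> left_of_line d c a b"

lemma line_separated_disjoint:
  assumes "line_separated a b c d"
  shows "open_segment a b \<inter> open_segment c d = {}"
proof -
  have "open_segment a b \<subseteq> closed_segment b a" "open_segment c d \<subseteq> closed_segment d c"
    by (auto simp: open_segment_def closed_segment_commute)
  then show ?thesis
    using assms left_of_line_disjoint[of a b c d] left_of_line_disjoint[of b a c d]
      left_of_line_disjoint[of c d a b] left_of_line_disjoint[of d c a b]
    unfolding line_separated_def open_segment_def by blast
qed

lemma inner_closed_segment_nonneg: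
  assumes "x \<in> closed_segment a b"
  shows "0 \<le> inner (x - a) (b - a)"
proof -
  obtain u where "0 \<le> u" "x - a = u *\<^sub>R (b - a)"
    using assms by (auto simp: in_segment algebra_simps)
  then show ?thesis by simp
qed

definition off_segment :: "point \<Rightarrow> point \<Rightarrow> point \<Rightarrow> bool" where
  "off_segment p a b \<longleftrightarrow> p = a \<or> p = b \<or> cross (b - a) (p - a) \<noteq> 0 \<or>
     inner (p - a) (b - a) < 0 \<or> inner (p - b) (a - b) < 0"

lemma off_segment_notin:
  assumes "off_segment p a b"
  shows "p \<notin> open_segment a b"
proof
  assume "p \<in> open_segment a b"
  then have "p \<in> closed_segment a b" "p \<in> closed_segment b a" "p \<noteq> a" "p \<noteq> b"
    by (auto simp: open_segment_def closed_segment_commute)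
  then show False
    using assms cross_closed_segment inner_closed_segment_nonneg
    unfolding off_segment_def by (meson not_le)
qed

lemma closed_segments_inter_unique:
  assumes "cross (b - a) (d - c) \<noteq> 0"
    and "x \<in> closed_segment a b" "x \<in> closed_segment c d"
    and "y \<in> closed_segment a b" "y \<in> closed_segment c d"
  shows "x = y"
proof -
  obtain s s' where s: "x = (1 - s) *\<^sub>R a + s *\<^sub>R b" "y = (1 - s') *\<^sub>R a + s' *\<^sub>R b"
    using assms(2,4) by (auto simp: in_segment)
  have xy: "x - y = (s - s') *\<^sub>R (b - a)"
    unfolding s by (simp add: algebra_simps)
  obtain t t' where t: "x = (1 - t) *\<^sub>R c + t *\<^sub>R d" "y = (1 - t') *\<^sub>R c + t' *\<^sub>R d"
    using assms(3,5) by (auto simp: in_segment)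
  have "x - y = (t - t') *\<^sub>R (d - c)"
    unfolding t by (simp add: algebra_simps)
  then have "cross (x - y) (d - c) = 0"
    by (simp add: cross_scaleR_left cross_self)
  then have "s = s'"
    using assms(1) by (simp add: xy cross_scaleR_left)
  then show ?thesis using xy by simp
qed

lemma closed_segment_norm_le:
  assumes "x \<in> closed_segment a b"
  shows "norm x \<le> max (norm a) (norm b)"
proof -
  have "closed_segment a b \<subseteq> cball 0 (max (norm a) (norm b))"
    by (intro closed_segment_subset convex_cball) auto
  then show ?thesis using assms by auto
qed

lemma closed_segment_norm_ge:
  assumes "x \<in> closed_segment a b" "r \<le> inner u a" "r \<le> inner u b"
  shows "r \<le> norm u * norm x"
proof -
  have "closed_segment a b \<subseteq> {x. r \<le> inner u x}"
    using assms(2,3) by (intro closed_segment_subset convex_halfspace_ge) auto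
  then show ?thesis
    using assms(1) norm_cauchy_schwarz[of u x] by auto
qed

section \<open>The spiral map\<close>

(* Multiplication by -2 - i, reading points as complex numbers. *)
definition twist :: "point \<Rightarrow> point" where
  "twist p = (- 2 * fst p + snd p, - fst p - 2 * snd p)"

lemma twist_Pair [simp]: "twist (x, y) = (- 2 * x + y, - x - 2 * y)"
  by (simp add: twist_def)

lemma linear_twist: "linear twist"
  by (rule linearI) (auto simp: twist_def algebra_simps)

lemma inj_twist: "inj twist"
  by (rule injI) (auto simp: twist_def prod_eq_iff)

lemma norm_twist: "norm (twist p) = sqrt 5 * norm p"
proof -
  have "(norm (twist p))\<^sup>2 = 5 * (norm p)\<^sup>2"
    by (simp add: norm_prod_def twist_def power2_eq_square algebra_simps)
  then have "norm (twist p) = sqrt (5 * (norm p)\<^sup>2)"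
    by (metis norm_ge_zero real_sqrt_unique)
  then show ?thesis
    by (simp add: real_sqrt_mult)
qed

lemma norm_funpow_twist: "norm ((twist ^^ j) p) = sqrt 5 ^ j * norm p"
  by (induction j) (simp_all add: norm_twist)

lemma sqrt_5_pow_gt_25:
  assumes "5 \<le> j"
  shows "25 < sqrt 5 ^ j"
proof -
  have "sqrt 5 ^ 5 = (sqrt 5 ^ 2) ^ 2 * sqrt (5::real)"
    by algebra
  then have "sqrt 5 ^ 5 = 25 * sqrt (5::real)"
    by simp
  also have "25 < 25 * sqrt (5::real)" by simp
  also have "sqrt 5 ^ 5 \<le> sqrt (5::real) ^ j"
    using assms by (intro power_increasing) auto
  finally show ?thesis by simp
qed

lemma open_segment_funpow_twist:
  "open_segment ((twist ^^ j) a) ((twist ^^ j) b) = (twist ^^ j) ` open_segment a b"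
  by (induction j) (simp_all add: open_segment_linear_image[OF linear_twist inj_twist] image_image)

section \<open>Vertices and edge classes\<close>

definition vertex_point :: "nat \<Rightarrow> point" where
  "vertex_point v = (twist ^^ (v div 2)) (if even v then (1, 0) else (- 2, 1))"

lemma vertex_point_0 [simp]: "vertex_point 0 = (1, 0)"
  and vertex_point_1 [simp]: "vertex_point (Suc 0) = (- 2, 1)"
  and vertex_point_Suc_Suc [simp]: "vertex_point (Suc (Suc v)) = twist (vertex_point v)"
  by (simp_all add: vertex_point_def)

lemma vertex_point_shift: "vertex_point (2 * i + v) = (twist ^^ i) (vertex_point v)"
  by (induction i) (simp_all add: numeral_eq_Suc)

lemma norm_vertex_point: "norm (vertex_point v) = sqrt 5 ^ (v div 2 + v mod 2)"
proof -
  have "v mod 2 = 0 \<or> v mod 2 = Suc 0" by arith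
  then have "norm (vertex_point (v mod 2)) = sqrt 5 ^ (v mod 2)"
    by (elim disjE) (simp_all add: norm_Pair)
  then show ?thesis
    using vertex_point_shift[of "v div 2" "v mod 2"] by (simp add: norm_funpow_twist power_add)
qed

lemma vertex_point_parity_distinct: "vertex_point (2 * m + 2) \<noteq> vertex_point (2 * m + 1)"
proof -
  have "vertex_point 2 \<noteq> vertex_point 1" by (simp add: numeral_eq_Suc)
  then have "(twist ^^ m) (vertex_point 2) \<noteq> (twist ^^ m) (vertex_point 1)"
    using inj_fn[OF inj_twist] by (simp add: inj_eq)
  then show ?thesis by (metis vertex_point_shift)
qed

lemma inj_vertex_point: "inj vertex_point"
proof (rule injI)
  fix u v assume uv: "vertex_point u = vertex_point v"
  then have "sqrt 5 ^ (u div 2 + u mod 2) = sqrt (5::real) ^ (v div 2 + v mod 2)"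
    by (simp add: norm_vertex_point[symmetric])
  then have sum_eq: "u div 2 + u mod 2 = v div 2 + v mod 2"
    by (simp add: power_inject_exp)
  have "u mod 2 = v mod 2"
  proof (rule ccontr)
    assume parity: "u mod 2 \<noteq> v mod 2"
    have "u = 2 * (u div 2) + u mod 2" "v = 2 * (v div 2) + v mod 2" "u mod 2 < 2" "v mod 2 < 2"
      by simp_all
    with parity sum_eq consider "u = 2 * (v div 2) + 2" "v = 2 * (v div 2) + 1"
      | "v = 2 * (u div 2) + 2" "u = 2 * (u div 2) + 1"
      by linarith
    then show False
      using uv vertex_point_parity_distinct by cases metis+
  qed
  with sum_eq show "u = v"
    by (metis add_right_cancel div_mult_mod_eq)
qed

definition base_edges :: "(nat \<times> nat) set" where
  "base_edges = {(1, 2), (1, 4), (1, 8), (0, 7), (1, 7)}"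

lemma base_edges_bounds: "c \<in> base_edges \<Longrightarrow> fst c < 2 \<and> fst c < snd c \<and> snd c \<le> 8"
  by (auto simp: base_edges_def)

definition edge_segment :: "nat \<times> nat \<Rightarrow> nat \<Rightarrow> point set" where
  "edge_segment c i = open_segment (vertex_point (2 * i + fst c)) (vertex_point (2 * i + snd c))"

lemma edge_segment_shift: "edge_segment c (i + j) = (twist ^^ i) ` edge_segment c j"
proof -
  have "2 * (i + j) + v = 2 * i + (2 * j + v)" for v :: nat by simp
  then show ?thesis
    by (simp only: edge_segment_def vertex_point_shift open_segment_funpow_twist)
qed

lemma edge_segment_eq_image: "edge_segment c j = (twist ^^ j) ` edge_segment c 0"
  using edge_segment_shift[of c j 0] by simp

definition crossing_pair :: "nat \<times> nat \<Rightarrow> nat \<Rightarrow> nat \<times> nat \<Rightarrow> nat \<Rightarrow> bool" where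
  "crossing_pair c i c' i' \<longleftrightarrow>
     (c = (0, 7) \<and> c' = (1, 2) \<and> i' = i + 1) \<or> (c = (1, 2) \<and> c' = (0, 7) \<and> i = i' + 1) \<or>
     (c = (1, 7) \<and> c' = (0, 7) \<and> i' = i + 2) \<or> (c = (0, 7) \<and> c' = (1, 7) \<and> i = i' + 2)"

lemma crossing_pair_shift: "crossing_pair c 0 c' j \<Longrightarrow> crossing_pair c i c' (i + j)"
  and crossing_pair_sym: "crossing_pair c i c' i' \<Longrightarrow> crossing_pair c' i' c i"
  unfolding crossing_pair_def by auto

lemma card_crossing_partners:
  "finite {(c', i'). crossing_pair c i c' i'} \<and> card {(c', i'). crossing_pair c i c' i'} \<le> 2"
proof -
  let ?P = "if c = (0, 7) then {((1, 2), i + 1), ((1, 7), i - 2)} else {((0, 7), i - 1), ((0, 7), i + 2)}"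
  have "{(c', i'). crossing_pair c i c' i'} \<subseteq> ?P"
    by (auto simp: crossing_pair_def)
  moreover have "finite ?P" "card ?P \<le> 2"
    by (simp_all add: card_insert_if)
  ultimately show ?thesis
    by (meson card_mono finite_subset order_trans)
qed

section \<open>Crossings between edge segments\<close>

text \<open>The following six lemmas are exact finite computations. Translates of a base edge
  by j \<ge> 5 steps need no computation: they are kept apart from the base edges by their norms.\<close>

lemma base_edges_line_separated:
  assumes "c \<in> base_edges" "c' \<in> base_edges" "j < 5" "(c, 0) \<noteq> (c', j)"
    and "\<not> crossing_pair c 0 c' j"
  shows "line_separated (vertex_point (fst c)) (vertex_point (snd c))
    (vertex_point (2 * j + fst c')) (vertex_point (2 * j + snd c'))"
proof -
  have j: "j = 0 \<or> j = 1 \<or> j = 2 \<or> j = 3 \<or> j = 4" using assms(3) by auto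
  show ?thesis
    using assms(1,2) j assms(4,5) unfolding base_edges_def insert_iff empty_iff
    by (elim disjE) (simp_all add: numeral_eq_Suc crossing_pair_def line_separated_def left_of_line_def cross_def)
qed

lemma base_edges_transversal:
  assumes "crossing_pair c 0 c' j"
  shows "cross (vertex_point (snd c) - vertex_point (fst c))
    (vertex_point (2 * j + snd c') - vertex_point (2 * j + fst c')) \<noteq> 0"
  using assms unfolding crossing_pair_def by (auto simp: numeral_eq_Suc cross_def)

lemma base_edges_off_vertices:
  assumes "c \<in> base_edges" "v < 10"
  shows "off_segment (vertex_point v) (vertex_point (fst c)) (vertex_point (snd c))"
proof -
  have "v \<in> {0, 1, 2, 3, 4, 5, 6, 7, 8, 9}" using assms(2) by auto
  then show ?thesis
    using assms(1) unfolding base_edges_def insert_iff empty_iff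
    by (elim disjE) (simp_all add: numeral_eq_Suc off_segment_def cross_def)
qed

lemma shifted_base_edges_off_vertices:
  assumes "c \<in> base_edges" "v < 2"
  shows "off_segment (vertex_point v) (vertex_point (2 + fst c)) (vertex_point (2 + snd c))"
proof -
  have "v = 0 \<or> v = 1" using assms(2) by auto
  then show ?thesis
    using assms(1) unfolding base_edges_def insert_iff empty_iff
    by (elim disjE) (simp_all add: numeral_eq_Suc off_segment_def cross_def)
qed

lemma base_edges_halfplane:
  assumes "c \<in> base_edges"
  shows "\<exists>u \<in> {(1, 0), (- 1, 0), (0, 1)}.
    1 \<le> inner u (vertex_point (fst c)) \<and> 1 \<le> inner u (vertex_point (snd c))"
  using assms unfolding base_edges_def by (auto simp: numeral_eq_Suc)

lemma base_edges_norm_le: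
  assumes "c \<in> base_edges"
  shows "norm (vertex_point (fst c)) \<le> 25 \<and> norm (vertex_point (snd c)) \<le> 25"
  using assms unfolding base_edges_def by (auto simp: numeral_eq_Suc norm_Pair intro!: real_le_lsqrt)

lemma norm_base_segment:
  assumes "c \<in> base_edges" "x \<in> edge_segment c 0"
  shows "1 \<le> norm x \<and> norm x \<le> 25"
proof -
  have x: "x \<in> closed_segment (vertex_point (fst c)) (vertex_point (snd c))"
    using assms(2) by (simp add: edge_segment_def open_segment_def)
  obtain u :: point where u: "u \<in> {(1, 0), (- 1, 0), (0, 1)}"
    "1 \<le> inner u (vertex_point (fst c))" "1 \<le> inner u (vertex_point (snd c))"
    using base_edges_halfplane[OF assms(1)] by blast
  have "norm u = 1" using u(1) by (auto simp: norm_Pair)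
  then have "1 \<le> norm x"
    using closed_segment_norm_ge[OF x u(2,3)] by simp
  moreover have "norm x \<le> 25"
    using closed_segment_norm_le[OF x] base_edges_norm_le[OF assms(1)] by linarith
  ultimately show ?thesis ..
qed

lemma norm_edge_segment_ge:
  assumes "c \<in> base_edges" "x \<in> edge_segment c j"
  shows "sqrt 5 ^ j \<le> norm x"
proof -
  obtain y where "y \<in> edge_segment c 0" "x = (twist ^^ j) y"
    using assms(2) edge_segment_eq_image by blast
  then show ?thesis
    using norm_base_segment[OF assms(1)] by (simp add: norm_funpow_twist)
qed

lemma base_segments_inter:
  assumes "c \<in> base_edges" "c' \<in> base_edges" "(c, 0) \<noteq> (c', j)"
    and "x \<in> edge_segment c 0" "x \<in> edge_segment c' j"
  shows "crossing_pair c 0 c' j \<and> edge_segment c 0 \<inter> edge_segment c' j = {x}"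
proof
  show crossing: "crossing_pair c 0 c' j"
  proof (rule ccontr)
    assume no_crossing: "\<not> crossing_pair c 0 c' j"
    show False
    proof (cases "j < 5")
      case True
      show False
        using line_separated_disjoint[OF base_edges_line_separated[OF assms(1,2) True assms(3) no_crossing]]
          assms(4,5) by (auto simp: edge_segment_def)
    next
      case False
      have "norm x \<le> 25" using norm_base_segment[OF assms(1,4)] by simp
      moreover have "sqrt 5 ^ j \<le> norm x" using norm_edge_segment_ge[OF assms(2,5)] .
      ultimately show False using sqrt_5_pow_gt_25[of j] False by linarith
    qed
  qed
  show "edge_segment c 0 \<inter> edge_segment c' j = {x}"
    using assms(4,5) closed_segments_inter_unique[OF base_edges_transversal[OF crossing]]
    unfolding edge_segment_def mult_0_right add_0 by (blast dest: open_closed_segment)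
qed

lemma edge_segments_inter_shifted:
  assumes "c \<in> base_edges" "c' \<in> base_edges" "(c, i) \<noteq> (c', i + j)"
    and "x \<in> edge_segment c i" "x \<in> edge_segment c' (i + j)"
  shows "crossing_pair c i c' (i + j) \<and> edge_segment c i \<inter> edge_segment c' (i + j) = {x}"
proof -
  have seg: "edge_segment c i = (twist ^^ i) ` edge_segment c 0"
    "edge_segment c' (i + j) = (twist ^^ i) ` edge_segment c' j"
    using edge_segment_shift[of c i 0] edge_segment_shift[of c' i j] by simp_all
  obtain y where y: "x = (twist ^^ i) y" "y \<in> edge_segment c 0"
    using assms(4) seg(1) by auto
  moreover have "y \<in> edge_segment c' j"
    using assms(5) seg(2) y(1) by (simp add: inj_image_mem_iff[OF inj_fn[OF inj_twist]])
  moreover have "(c, 0) \<noteq> (c', j)" using assms(3) by auto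
  ultimately have "crossing_pair c 0 c' j \<and> edge_segment c 0 \<inter> edge_segment c' j = {y}"
    using base_segments_inter[OF assms(1,2)] by blast
  then show ?thesis
    by (simp add: seg y(1) crossing_pair_shift image_Int[OF inj_fn[OF inj_twist], symmetric])
qed

lemma edge_segments_inter:
  assumes "c \<in> base_edges" "c' \<in> base_edges" "(c, i) \<noteq> (c', i')"
    and "x \<in> edge_segment c i" "x \<in> edge_segment c' i'"
  shows "crossing_pair c i c' i' \<and> edge_segment c i \<inter> edge_segment c' i' = {x}"
proof (cases "i \<le> i'")
  case True
  then obtain j where "i' = i + j" using le_iff_add by blast
  then show ?thesis using edge_segments_inter_shifted[OF assms(1,2), of i j x] assms(3-5) by simp
next
  case False
  then obtain j where "i = i' + j" using le_iff_add[of i' i] by auto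
  then have "crossing_pair c' i' c i \<and> edge_segment c' i' \<inter> edge_segment c i = {x}"
    using edge_segments_inter_shifted[OF assms(2,1), of i' j x] assms(3-5) by auto
  then show ?thesis by (auto intro: crossing_pair_sym)
qed

lemma vertex_point_notin_base_segment:
  assumes "c \<in> base_edges"
  shows "vertex_point v \<notin> edge_segment c 0"
proof (cases "v < 10")
  case True
  then show ?thesis
    using off_segment_notin[OF base_edges_off_vertices[OF assms]] by (simp add: edge_segment_def)
next
  case False
  then have "25 < norm (vertex_point v)"
    unfolding norm_vertex_point by (intro sqrt_5_pow_gt_25) linarith
  then show ?thesis using norm_base_segment[OF assms] by fastforce
qed

lemma base_vertex_notin_edge_segment:
  assumes "c \<in> base_edges" "v < 2" "0 < j"
  shows "vertex_point v \<notin> edge_segment c j"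
proof (cases "j = 1")
  case True
  then show ?thesis
    using off_segment_notin[OF shifted_base_edges_off_vertices[OF assms(1,2)]]
    by (simp add: edge_segment_def)
next
  case False
  have "v = 0 \<or> v = 1" using assms(2) by auto
  then have "norm (vertex_point v) \<le> sqrt 5"
    by (auto simp: norm_vertex_point)
  also have "\<dots> < sqrt 5 ^ 2" by (simp add: real_less_lsqrt)
  also have "\<dots> \<le> sqrt 5 ^ j" using False assms(3) by (intro power_increasing) auto
  finally show ?thesis using norm_edge_segment_ge[OF assms(1)] by fastforce
qed

lemma vertex_point_notin_edge_segment:
  assumes "c \<in> base_edges"
  shows "vertex_point v \<notin> edge_segment c i"
proof (cases "i \<le> v div 2")
  case True
  have "vertex_point v = (twist ^^ i) (vertex_point (v - 2 * i))"
    using True vertex_point_shift[of i "v - 2 * i"] by simp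
  moreover have "edge_segment c i = (twist ^^ i) ` edge_segment c 0"
    using edge_segment_shift[of c i 0] by simp
  ultimately show ?thesis
    using vertex_point_notin_base_segment[OF assms]
    by (simp add: inj_image_mem_iff[OF inj_fn[OF inj_twist]])
next
  case False
  then obtain j where j: "i = v div 2 + j" "0 < j"
    by (metis less_imp_add_positive not_le)
  have "vertex_point v = (twist ^^ (v div 2)) (vertex_point (v mod 2))"
    using vertex_point_shift[of "v div 2" "v mod 2"] by simp
  moreover have "edge_segment c i = (twist ^^ (v div 2)) ` edge_segment c j"
    using edge_segment_shift[of c "v div 2" j] j(1) by simp
  ultimately show ?thesis
    using base_vertex_notin_edge_segment[OF assms _ j(2), of "v mod 2"]
    by (simp add: inj_image_mem_iff[OF inj_fn[OF inj_twist]])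
qed

section \<open>The graph\<close>

definition spiral_edge :: "nat \<times> nat \<Rightarrow> nat \<Rightarrow> nat set" where
  "spiral_edge c i = {2 * i + fst c, 2 * i + snd c}"

definition spiral_edges :: "nat \<Rightarrow> nat set set" where
  "spiral_edges n = (\<lambda>(c, i). spiral_edge c i) ` {(c, i). c \<in> base_edges \<and> 2 * i + snd c < n}"

definition edge_curve :: "nat set \<Rightarrow> real \<Rightarrow> point" where
  "edge_curve e = linepath (vertex_point (Min e)) (vertex_point (Max e))"

lemma spiral_edge_inj:
  assumes "c \<in> base_edges" "c' \<in> base_edges" "spiral_edge c i = spiral_edge c' i'"
  shows "(c, i) = (c', i')"
proof -
  have "2 * i + fst c = 2 * i' + fst c' \<and> 2 * i + snd c = 2 * i' + snd c'"
    using assms(3) base_edges_bounds[OF assms(1)] base_edges_bounds[OF assms(2)]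
    unfolding spiral_edge_def doubleton_eq_iff by linarith
  moreover have "fst c < 2" "fst c' < 2"
    using base_edges_bounds assms(1,2) by blast+
  ultimately show ?thesis by (auto simp: prod_eq_iff) presburger+
qed

lemma spiral_edgesE:
  assumes "e \<in> spiral_edges n"
  obtains c i where "c \<in> base_edges" "2 * i + snd c < n" "e = spiral_edge c i"
  using assms unfolding spiral_edges_def by auto

lemma finite_spiral_edge_indices: "finite {(c, i). c \<in> base_edges \<and> 2 * i + snd c < n}"
proof -
  have "{(c, i). c \<in> base_edges \<and> 2 * i + snd c < n} \<subseteq> base_edges \<times> {..<n}"
    by auto
  moreover have "finite base_edges" by (simp add: base_edges_def)
  ultimately show ?thesis
    by (meson finite_SigmaI finite_lessThan finite_subset)
qed

lemma finite_spiral_edges: "finite (spiral_edges n)"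
  unfolding spiral_edges_def using finite_spiral_edge_indices by blast

lemma curve_interior_edge_curve:
  assumes "c \<in> base_edges"
  shows "curve_interior (edge_curve (spiral_edge c i)) = edge_segment c i"
proof -
  have "fst c < snd c" using base_edges_bounds[OF assms] by blast
  then show ?thesis
    by (simp add: curve_interior_def edge_curve_def spiral_edge_def edge_segment_def
        open_segment_def)
qed

lemma spiral_edges_drawing: "is_drawing {..<n} (spiral_edges n) vertex_point edge_curve"
  unfolding is_drawing_def
proof (intro conjI ballI impI)
  show "inj_on vertex_point {..<n}"
    using inj_vertex_point by (simp add: inj_on_def)
next
  fix e assume "e \<in> spiral_edges n"
  then obtain c i where c: "c \<in> base_edges" and e: "e = spiral_edge c i"
    by (rule spiral_edgesE)
  have less: "2 * i + fst c < 2 * i + snd c"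
    using base_edges_bounds[OF c] by simp
  then show "\<exists>u v. e = {u, v} \<and> pathstart (edge_curve e) = vertex_point u \<and>
      pathfinish (edge_curve e) = vertex_point v"
    by (auto simp: e spiral_edge_def edge_curve_def)
  show "arc (edge_curve e)"
    using less inj_vertex_point by (simp add: e spiral_edge_def edge_curve_def inj_eq)
  show "vertex_point w \<notin> curve_interior (edge_curve e)" for w
    using vertex_point_notin_edge_segment[OF c] by (simp add: e curve_interior_edge_curve[OF c])
next
  fix e f assume "e \<in> spiral_edges n" "f \<in> spiral_edges n" "e \<noteq> f"
  moreover obtain c i where "c \<in> base_edges" "e = spiral_edge c i"
    using \<open>e \<in> spiral_edges n\<close> by (rule spiral_edgesE)
  moreover obtain c' i' where "c' \<in> base_edges" "f = spiral_edge c' i'"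
    using \<open>f \<in> spiral_edges n\<close> by (rule spiral_edgesE)
  ultimately have c: "c \<in> base_edges" "c' \<in> base_edges"
    and ef: "e = spiral_edge c i" "f = spiral_edge c' i'" "(c, i) \<noteq> (c', i')"
    by auto
  show "finite (curve_interior (edge_curve e) \<inter> curve_interior (edge_curve f))"
    using edge_segments_inter[OF c ef(3)]
    by (cases "edge_segment c i \<inter> edge_segment c' i' = {}")
      (auto simp: ef curve_interior_edge_curve c)
qed

lemma crossings_on_le_card:
  assumes "finite E" "\<And>f. f \<in> E - {e} \<Longrightarrow> card (curve_interior (\<gamma> e) \<inter> curve_interior (\<gamma> f)) \<le> 1"
  shows "crossings_on E \<gamma> e \<le> card {f \<in> E - {e}. curve_interior (\<gamma> e) \<inter> curve_interior (\<gamma> f) \<noteq> {}}"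
proof -
  have "crossings_on E \<gamma> e \<le>
      (\<Sum>f\<in>E - {e}. if curve_interior (\<gamma> e) \<inter> curve_interior (\<gamma> f) \<noteq> {} then 1 else 0)"
    unfolding crossings_on_def using assms(2) by (intro sum_mono) auto
  also have "\<dots> = card {f \<in> E - {e}. curve_interior (\<gamma> e) \<inter> curve_interior (\<gamma> f) \<noteq> {}}"
    using assms(1) by (simp add: sum.inter_filter[symmetric])
  finally show ?thesis .
qed

lemma spiral_edges_crossings:
  assumes "e \<in> spiral_edges n"
  shows "crossings_on (spiral_edges n) edge_curve e \<le> 2"
proof -
  obtain c i where c: "c \<in> base_edges" and e: "e = spiral_edge c i"
    using assms by (rule spiral_edgesE)
  let ?meets = "\<lambda>f. curve_interior (edge_curve e) \<inter> curve_interior (edge_curve f) \<noteq> {}"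
  let ?partners = "(\<lambda>(c', i'). spiral_edge c' i') ` {(c', i'). crossing_pair c i c' i'}"
  have partner: "card (curve_interior (edge_curve e) \<inter> curve_interior (edge_curve f)) \<le> 1 \<and>
      (?meets f \<longrightarrow> f \<in> ?partners)" if f: "f \<in> spiral_edges n - {e}" for f
  proof -
    obtain c' i' where c': "c' \<in> base_edges" and f_eq: "f = spiral_edge c' i'"
      using f by (blast elim: spiral_edgesE)
    have "(c, i) \<noteq> (c', i')" using f e f_eq by auto
    then show ?thesis
      using edge_segments_inter[OF c c']
      by (cases "edge_segment c i \<inter> edge_segment c' i' = {}")
        (auto simp: e f_eq curve_interior_edge_curve c c')
  qed
  have "crossings_on (spiral_edges n) edge_curve e \<le> card {f \<in> spiral_edges n - {e}. ?meets f}"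
    using crossings_on_le_card[OF finite_spiral_edges] partner by blast
  also have "\<dots> \<le> card ?partners"
    using partner card_crossing_partners by (intro card_mono) auto
  also have "\<dots> \<le> card {(c', i'). crossing_pair c i c' i'}"
    by (rule card_image_le) (simp add: card_crossing_partners)
  also have "\<dots> \<le> 2"
    using card_crossing_partners by blast
  finally show ?thesis .
qed

lemma k_planar_spiral_edges: "k_planar 2 {..<n} (spiral_edges n)"
  unfolding k_planar_def using spiral_edges_drawing spiral_edges_crossings by blast

lemma simple_graph_spiral_edges: "simple_graph {..<n} (spiral_edges n)"
  unfolding simple_graph_def
proof (intro conjI subsetI)
  fix e assume "e \<in> spiral_edges n"
  then obtain c i where c: "c \<in> base_edges" "2 * i + snd c < n" and e: "e = spiral_edge c i"
    by (rule spiral_edgesE)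
  then have "2 * i + fst c \<in> {..<n}" "2 * i + snd c \<in> {..<n}" "2 * i + fst c \<noteq> 2 * i + snd c"
    using base_edges_bounds[OF c(1)] by simp_all
  then show "e \<in> {{u, v} |u v. u \<in> {..<n} \<and> v \<in> {..<n} \<and> u \<noteq> v}"
    unfolding e spiral_edge_def by blast
qed simp

lemma card_spiral_edges: "5 * ((n - 8) div 2) \<le> card (spiral_edges n)"
proof -
  let ?I = "{(c, i). c \<in> base_edges \<and> 2 * i + snd c < n}"
  have "2 * i + snd c < n" if "c \<in> base_edges" "i < (n - 8) div 2" for c i
  proof -
    have "2 * ((n - 8) div 2) \<le> n - 8" by simp
    then show ?thesis using base_edges_bounds[OF that(1)] that(2) by linarith
  qed
  then have "base_edges \<times> {..<(n - 8) div 2} \<subseteq> ?I"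
    by auto
  then have "card (base_edges \<times> {..<(n - 8) div 2}) \<le> card ?I"
    by (intro card_mono finite_spiral_edge_indices)
  moreover have "card (base_edges \<times> {..<(n - 8) div 2}) = 5 * ((n - 8) div 2)"
    by (simp add: card_cartesian_product base_edges_def)
  moreover have "inj_on (\<lambda>(c, i). spiral_edge c i) ?I"
    using spiral_edge_inj by (auto simp: inj_on_def)
  ultimately show ?thesis
    unfolding spiral_edges_def by (simp add: card_image)
qed

definition linked :: "int \<Rightarrow> int \<Rightarrow> bool" where
  "linked u v \<longleftrightarrow> (even u \<and> odd v \<and> u - v \<in> {- 7, 1, 3, 7}) \<or>
     (odd u \<and> even v \<and> v - u \<in> {- 7, 1, 3, 7}) \<or> (odd u \<and> odd v \<and> \<bar>u - v\<bar> = 6)"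

lemma linked_sym: "linked u v \<Longrightarrow> linked v u"
  unfolding linked_def by auto

lemma linked_no_C4_through_even:
  assumes "even a" "linked a b" "linked b c" "linked c d" "linked d a" "a \<noteq> c" "b \<noteq> d"
  shows False
proof -
  have b: "odd b" "a - b \<in> {- 7, 1, 3, 7}" and d: "odd d" "a - d \<in> {- 7, 1, 3, 7}"
    using assms(1,2,5) unfolding linked_def by auto
  show False
  proof (cases "even c")
    case True
    then have "c - b \<in> {- 7, 1, 3, 7}" "c - d \<in> {- 7, 1, 3, 7}"
      using assms(3,4) b d unfolding linked_def by auto
    then show False using b d assms(6,7) by auto
  next
    case False
    then have "\<bar>b - c\<bar> = 6" "\<bar>c - d\<bar> = 6"
      using assms(3,4) b d unfolding linked_def by auto
    then show False using b d assms(6,7) by auto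
  qed
qed

lemma linked_no_C4:
  assumes "linked a b" "linked b c" "linked c d" "linked d a" "a \<noteq> c" "b \<noteq> d"
  shows False
proof -
  consider "even a" | "even b" | "even c" | "even d" | "odd a" "odd b" "odd c" "odd d"
    by blast
  then show False
  proof cases
    case 1
    then show False using assms linked_no_C4_through_even[of a b c d] by blast
  next
    case 2
    then show False using assms linked_no_C4_through_even[of b c d a] by blast
  next
    case 3
    then show False using assms linked_no_C4_through_even[of c d a b] by blast
  next
    case 4
    then show False using assms linked_no_C4_through_even[of d a b c] by blast
  next
    case 5
    then show False using assms unfolding linked_def by auto
  qed
qed

lemma linked_spiral_edge:
  assumes "c \<in> base_edges"
  shows "linked (int (2 * i + fst c)) (int (2 * i + snd c))"
  using assms unfolding base_edges_def by (auto simp: linked_def)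

lemma C4_free_spiral_edges: "C4_free {..<n} (spiral_edges n)"
proof -
  have linked_edge: "linked (int u) (int v)" if uv: "{u, v} \<in> spiral_edges n" for u v
  proof -
    obtain c i where c: "c \<in> base_edges" and "2 * i + snd c < n" "{u, v} = spiral_edge c i"
      using uv by (rule spiral_edgesE)
    then have "(u, v) = (2 * i + fst c, 2 * i + snd c) \<or> (v, u) = (2 * i + fst c, 2 * i + snd c)"
      by (auto simp: spiral_edge_def doubleton_eq_iff)
    then show ?thesis
      using linked_spiral_edge[OF c, of i] linked_sym by auto
  qed
  show ?thesis
    unfolding C4_free_def
  proof (intro notI, elim exE conjE)
    fix a b c d
    assume "distinct [a, b, c, d]" "{a, b} \<in> spiral_edges n" "{b, c} \<in> spiral_edges n"
      "{c, d} \<in> spiral_edges n" "{d, a} \<in> spiral_edges n"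
    then show False
      using linked_no_C4[of "int a" "int b" "int c" "int d"] linked_edge by auto
  qed
qed

theorem theorem14:
  shows "\<exists>C::real. \<exists>N::nat. \<forall>n\<ge>N. \<exists>E :: nat set set.
           simple_graph {..<n} E \<and> C4_free {..<n} E \<and> k_planar 2 {..<n} E \<and>
           real (card E) \<ge> 5 / 2 * real n - C"
proof (intro exI allI impI conjI)
  fix n :: nat
  show "simple_graph {..<n} (spiral_edges n)" by (rule simple_graph_spiral_edges)
  show "C4_free {..<n} (spiral_edges n)" by (rule C4_free_spiral_edges)
  show "k_planar 2 {..<n} (spiral_edges n)" by (rule k_planar_spiral_edges)
  have "n \<le> 2 * ((n - 8) div 2) + 9" by linarith
  then show "5 / 2 * real n - 23 \<le> real (card (spiral_edges n))"
    using card_spiral_edges[of n] by linarith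
qed

end
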